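(* Let $d\ge2$. For any $\theta_A,\theta_B\in L^2(\mathbb R^{d-1};\mathbb R)$ and any $\zeta\in C(\mathbb R;\mathbb R^n)$ with $\zeta'\in L^2(\mathbb R;\mathbb R^n)$, $$\|T_{\theta_A}\zeta-T_{\theta_B}\zeta\|_{L^2(\mathbb R^d;\mathbb R^n)}\le\|\theta_A-\theta_B\|_{L^2(\mathbb R^{d-1};\mathbb R)}\|\zeta'\|_{L^2(\mathbb R;\mathbb R^n)}.$$
   Context: Points of $\mathbb R^d$ are $(x,y)$ with $x\in\mathbb R$, $y\in\mathbb R^{d-1}$; for $\theta:\mathbb R^{d-1}\to\mathbb R$, $(T_\theta\zeta)(x,y)=\zeta(x-\theta(y))$. *)

theory Defs
  imports "HOL-Analysis.Analysis"
begin

text \<open>Points of R^d are pairs (x,y) with x real and y in R^(d-1), modelled by a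
  euclidean space 'm.  (T_theta zeta)(x,y) = zeta(x - theta y).\<close>
definition shiftT :: "('m \<Rightarrow> real) \<Rightarrow> (real \<Rightarrow> 'n) \<Rightarrow> real \<times> 'm \<Rightarrow> 'n" where
  "shiftT \<theta> \<zeta> = (\<lambda>(x, y). \<zeta> (x - \<theta> y))"

end

theory Submission
  imports Defs
begin

text \<open>For fixed \<open>y\<close>, the difference \<open>\<zeta>(x - \<theta>\<^sub>A y) - \<zeta>(x - \<theta>\<^sub>B y)\<close> is the integral
  of \<open>\<zeta>'\<close> over an interval of length \<open>|\<theta>\<^sub>A y - \<theta>\<^sub>B y|\<close>, so by Cauchy-Schwarz its square is
  at most that length times the integral of \<open>|\<zeta>'|\<^sup>2\<close> over the interval. Integrating in \<open>x\<close>
  and exchanging the order of integration, each point is covered by these intervals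
  for a set of \<open>x\<close> of measure \<open>|\<theta>\<^sub>A y - \<theta>\<^sub>B y|\<close>, which gives the bound
  \<open>(\<theta>\<^sub>A y - \<theta>\<^sub>B y)\<^sup>2 \<parallel>\<zeta>'\<parallel>\<^sup>2\<close>; integrating in \<open>y\<close> proves the estimate. Lebesgue-measurable data
  are first replaced by almost-everywhere equal Borel functions, so that the integrand is
  measurable on the product and Tonelli's theorem applies.\<close>

lemma completion_ex_borel_measurable_euclidean:
  fixes g :: "'a \<Rightarrow> 'b::euclidean_space"
  assumes "g \<in> borel_measurable (completion M)"
  shows "\<exists>g'\<in>borel_measurable M. AE x in M. g x = g' x"
proof -
  have "\<exists>h\<in>borel_measurable M. AE x in M. g x \<bullet> b = h x" for b
    using assms by (intro completion_ex_borel_measurable_real) (simp add: borel_measurable_inner)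
  then obtain h where h: "\<And>b. h b \<in> borel_measurable M" "\<And>b. AE x in M. g x \<bullet> b = h b x"
    by metis
  have "AE x in M. \<forall>b\<in>Basis. g x \<bullet> b = h b x"
    by (rule AE_finite_allI) (auto intro: h(2))
  then have "AE x in M. g x = (\<Sum>b\<in>Basis. h b x *\<^sub>R b)"
  proof (rule AE_mp, intro AE_I2 impI)
    fix x
    assume coords: "\<forall>b\<in>Basis. g x \<bullet> b = h b x"
    have "g x = (\<Sum>b\<in>Basis. (g x \<bullet> b) *\<^sub>R b)"
      by (simp add: euclidean_representation)
    also have "\<dots> = (\<Sum>b\<in>Basis. h b x *\<^sub>R b)"
      using coords by (intro sum.cong refl) simp
    finally show "g x = (\<Sum>b\<in>Basis. h b x *\<^sub>R b)" .
  qed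
  moreover have "(\<lambda>x. \<Sum>b\<in>Basis. h b x *\<^sub>R b) \<in> borel_measurable M"
    using h(1) by (intro borel_measurable_sum borel_measurable_scaleR) auto
  ultimately show ?thesis by (rule bexI)
qed

lemma integrable_power2_diff:
  fixes f g :: "'a \<Rightarrow> real"
  assumes [measurable]: "f \<in> borel_measurable M" and "integrable M (\<lambda>x. (f x)\<^sup>2)"
    and [measurable]: "g \<in> borel_measurable M" and "integrable M (\<lambda>x. (g x)\<^sup>2)"
  shows "integrable M (\<lambda>x. (f x - g x)\<^sup>2)"
proof (rule Bochner_Integration.integrable_bound)
  show "integrable M (\<lambda>x. 2 * (f x)\<^sup>2 + 2 * (g x)\<^sup>2)"
    using assms(2,4) by simp
  have "(f x - g x)\<^sup>2 \<le> 2 * (f x)\<^sup>2 + 2 * (g x)\<^sup>2" for x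
    using zero_le_power2[of "f x + g x"] by (simp add: power2_eq_square algebra_simps)
  then show "AE x in M. norm ((f x - g x)\<^sup>2) \<le> norm (2 * (f x)\<^sup>2 + 2 * (g x)\<^sup>2)"
    by simp
qed measurable

lemma nn_integral_le_imp_integrable_integral_le:
  fixes f :: "'a \<Rightarrow> real"
  assumes "f \<in> borel_measurable M" "\<And>x. 0 \<le> f x"
    and le: "(\<integral>\<^sup>+x. ennreal (f x) \<partial>M) \<le> ennreal c" and "0 \<le> c"
  shows "integrable M f \<and> integral\<^sup>L M f \<le> c"
proof
  show int: "integrable M f"
    using assms(1,2) le by (intro integrableI_bounded) (auto simp: top.not_eq_extremum intro: le_less_trans)
  have "ennreal (integral\<^sup>L M f) = (\<integral>\<^sup>+x. ennreal (f x) \<partial>M)"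
    using int assms(2) by (simp add: nn_integral_eq_integral)
  with le have "ennreal (integral\<^sup>L M f) \<le> ennreal c"
    by simp
  with \<open>0 \<le> c\<close> show "integral\<^sup>L M f \<le> c"
    by (simp add: ennreal_le_iff)
qed

lemma set_nn_integral_Cauchy_Schwarz:
  assumes [measurable]: "f \<in> borel_measurable M" "A \<in> sets M"
  shows "(\<integral>\<^sup>+x\<in>A. f x \<partial>M)\<^sup>2 \<le> emeasure M A * (\<integral>\<^sup>+x\<in>A. (f x)\<^sup>2 \<partial>M)"
proof -
  have "(\<integral>\<^sup>+x\<in>A. f x \<partial>M)\<^sup>2 = (\<integral>\<^sup>+x. (f x * indicator A x) * indicator A x \<partial>M)\<^sup>2"
    by (simp add: mult.assoc flip: indicator_inter_arith)
  also have "\<dots> \<le> (\<integral>\<^sup>+x. (f x * indicator A x)\<^sup>2 \<partial>M) * (\<integral>\<^sup>+x. (indicator A x)\<^sup>2 \<partial>M)"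
    by (rule Cauchy_Schwarz_nn_integral) auto
  also have "(\<integral>\<^sup>+x. (f x * indicator A x)\<^sup>2 \<partial>M) = (\<integral>\<^sup>+x\<in>A. (f x)\<^sup>2 \<partial>M)"
    by (intro nn_integral_cong) (simp add: indicator_def)
  also have "(\<integral>\<^sup>+x. (indicator A x)\<^sup>2 \<partial>M) = emeasure M A"
  proof -
    have "(\<lambda>x. (indicator A x :: ennreal)\<^sup>2) = indicator A"
      by (auto simp: fun_eq_iff indicator_def)
    then show ?thesis by simp
  qed
  finally show ?thesis by (simp add: mult.commute)
qed

lemma norm_diff_sq_le_interval_nn_integral:
  fixes g \<zeta> :: "real \<Rightarrow> 'n::euclidean_space"
  assumes [measurable]: "g \<in> borel_measurable lborel" and "u \<le> v"
    and "(g has_integral (\<zeta> v - \<zeta> u)) {u..v}"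
  shows "ennreal ((norm (\<zeta> v - \<zeta> u))\<^sup>2)
    \<le> ennreal (v - u) * (\<integral>\<^sup>+t\<in>{u..v}. ennreal ((norm (g t))\<^sup>2) \<partial>lborel)"
proof -
  have CS: "(\<integral>\<^sup>+t\<in>{u..v}. ennreal (norm (g t)) \<partial>lborel)\<^sup>2
      \<le> ennreal (v - u) * (\<integral>\<^sup>+t\<in>{u..v}. ennreal ((norm (g t))\<^sup>2) \<partial>lborel)"
    using set_nn_integral_Cauchy_Schwarz[of "\<lambda>t. ennreal (norm (g t))" lborel "{u..v}"] \<open>u \<le> v\<close>
    by (simp add: ennreal_power)
  show ?thesis
  proof (cases "(\<integral>\<^sup>+t\<in>{u..v}. ennreal (norm (g t)) \<partial>lborel) = \<infinity>")
    case True
    with CS show ?thesis by (simp add: top_unique)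
  next
    case False
    have norm_ind: "ennreal (norm (indicator {u..v} t *\<^sub>R g t)) = ennreal (norm (g t)) * indicator {u..v} t" for t
      by (simp add: indicator_def)
    have int: "integrable lborel (\<lambda>t. indicator {u..v} t *\<^sub>R g t)"
    proof (rule integrableI_bounded)
      show "(\<integral>\<^sup>+t. ennreal (norm (indicator {u..v} t *\<^sub>R g t)) \<partial>lborel) < \<infinity>"
        using False by (simp only: norm_ind) (simp add: top.not_eq_extremum)
    qed simp
    then have "(LINT t:{u..v}|lborel. g t) = \<zeta> v - \<zeta> u"
      using assms(3) by (simp add: set_integrable_def set_borel_integral_eq_integral(2) integral_unique)
    then have "ennreal (norm (\<zeta> v - \<zeta> u)) = ennreal (norm (LINT t|lborel. indicator {u..v} t *\<^sub>R g t))"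
      by (simp add: set_lebesgue_integral_def)
    also have "\<dots> \<le> (\<integral>\<^sup>+t. ennreal (norm (indicator {u..v} t *\<^sub>R g t)) \<partial>lborel)"
      by (rule integral_norm_bound_ennreal[OF int])
    finally have "norm (\<zeta> v - \<zeta> u) \<le> (\<integral>\<^sup>+t\<in>{u..v}. ennreal (norm (g t)) \<partial>lborel)"
      by (simp only: norm_ind)
    then have "ennreal ((norm (\<zeta> v - \<zeta> u))\<^sup>2) \<le> (\<integral>\<^sup>+t\<in>{u..v}. ennreal (norm (g t)) \<partial>lborel)\<^sup>2"
      by (simp add: ennreal_power[symmetric] power_mono)
    then show ?thesis using CS by (rule order_trans)
  qed
qed

lemma nn_integral_translate_diff_sq_le_ordered:
  fixes g \<zeta> :: "real \<Rightarrow> 'n::euclidean_space"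
  assumes [measurable]: "g \<in> borel_measurable lborel" and ab: "a \<le> b"
    and FTC: "\<And>u v. u \<le> v \<Longrightarrow> (g has_integral (\<zeta> v - \<zeta> u)) {u..v}"
  shows "(\<integral>\<^sup>+x. ennreal ((norm (\<zeta> (x - a) - \<zeta> (x - b)))\<^sup>2) \<partial>lborel)
    \<le> ennreal ((b - a)\<^sup>2) * (\<integral>\<^sup>+t. ennreal ((norm (g t))\<^sup>2) \<partial>lborel)"
proof -
  define G where "G t = ennreal ((norm (g t))\<^sup>2)" for t
  have [measurable]: "G \<in> borel_measurable lborel"
    unfolding G_def by measurable
  have F: "(\<lambda>(x, t). G t * indicator {x - b..x - a} t) \<in> borel_measurable (lborel \<Otimes>\<^sub>M lborel)"
    by measurable (simp only: atLeastAtMost_iff, measurable)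
  have "(\<integral>\<^sup>+x. ennreal ((norm (\<zeta> (x - a) - \<zeta> (x - b)))\<^sup>2) \<partial>lborel)
      \<le> (\<integral>\<^sup>+x. ennreal (b - a) * (\<integral>\<^sup>+t\<in>{x - b..x - a}. G t \<partial>lborel) \<partial>lborel)"
  proof (intro nn_integral_mono)
    fix x
    show "ennreal ((norm (\<zeta> (x - a) - \<zeta> (x - b)))\<^sup>2) \<le> ennreal (b - a) * (\<integral>\<^sup>+t\<in>{x - b..x - a}. G t \<partial>lborel)"
      using norm_diff_sq_le_interval_nn_integral[of g "x - b" "x - a"] FTC[of "x - b" "x - a"] ab
      by (simp add: G_def)
  qed
  also have "\<dots> = ennreal (b - a) * (\<integral>\<^sup>+x. (\<integral>\<^sup>+t\<in>{x - b..x - a}. G t \<partial>lborel) \<partial>lborel)"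
    by (rule nn_integral_cmult) (use F in measurable)
  also have "(\<integral>\<^sup>+x. (\<integral>\<^sup>+t\<in>{x - b..x - a}. G t \<partial>lborel) \<partial>lborel)
      = (\<integral>\<^sup>+t. (\<integral>\<^sup>+x. G t * indicator {x - b..x - a} t \<partial>lborel) \<partial>lborel)"
    by (rule lborel_pair.Fubini'[symmetric, OF F])
  also have "\<dots> = (\<integral>\<^sup>+t. ennreal (b - a) * G t \<partial>lborel)"
  proof (intro nn_integral_cong)
    fix t
    have "(\<integral>\<^sup>+x. G t * indicator {x - b..x - a} t \<partial>lborel) = (\<integral>\<^sup>+x. G t * indicator {t + a..t + b} x \<partial>lborel)"
      by (intro nn_integral_cong) (auto simp: indicator_def)
    then show "(\<integral>\<^sup>+x. G t * indicator {x - b..x - a} t \<partial>lborel) = ennreal (b - a) * G t"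
      using ab by (simp add: nn_integral_cmult mult.commute)
  qed
  also have "\<dots> = ennreal (b - a) * (\<integral>\<^sup>+t. G t \<partial>lborel)"
    by (rule nn_integral_cmult) measurable
  also have "ennreal (b - a) * (ennreal (b - a) * (\<integral>\<^sup>+t. G t \<partial>lborel)) = ennreal ((b - a)\<^sup>2) * (\<integral>\<^sup>+t. G t \<partial>lborel)"
    using ab by (simp add: power2_eq_square ennreal_mult mult.assoc)
  finally show ?thesis
    by (simp only: G_def)
qed

lemma nn_integral_translate_diff_sq_le:
  fixes g \<zeta> :: "real \<Rightarrow> 'n::euclidean_space"
  assumes "g \<in> borel_measurable lborel"
    and "\<And>u v. u \<le> v \<Longrightarrow> (g has_integral (\<zeta> v - \<zeta> u)) {u..v}"
  shows "(\<integral>\<^sup>+x. ennreal ((norm (\<zeta> (x - a) - \<zeta> (x - b)))\<^sup>2) \<partial>lborel)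
    \<le> ennreal ((a - b)\<^sup>2) * (\<integral>\<^sup>+t. ennreal ((norm (g t))\<^sup>2) \<partial>lborel)"
proof (cases "a \<le> b")
  case True
  then show ?thesis
    using nn_integral_translate_diff_sq_le_ordered[OF assms(1) True assms(2)] by (simp add: power2_commute)
next
  case False
  then show ?thesis
    using nn_integral_translate_diff_sq_le_ordered[OF assms(1) _ assms(2), of b a] by (simp add: norm_minus_commute)
qed

lemma borel_measurable_shiftT [measurable]:
  fixes \<theta> :: "'m::euclidean_space \<Rightarrow> real" and \<zeta> :: "real \<Rightarrow> 'n::topological_space"
  assumes [measurable]: "\<theta> \<in> borel_measurable borel" "\<zeta> \<in> borel_measurable borel"
  shows "shiftT \<theta> \<zeta> \<in> borel_measurable borel"
  unfolding shiftT_def borel_prod[symmetric] by (simp add: case_prod_beta') measurable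

lemma AE_lborel_shiftT_eq:
  fixes \<theta> \<theta>' :: "'m::euclidean_space \<Rightarrow> real"
  assumes "AE y in lborel. \<theta> y = \<theta>' y"
  shows "AE p in lborel. shiftT \<theta> \<zeta> p = shiftT \<theta>' \<zeta> p"
proof -
  obtain N where N: "N \<in> null_sets lborel" "{y \<in> space lborel. \<theta> y \<noteq> \<theta>' y} \<subseteq> N"
    using assms unfolding eventually_ae_filter by blast
  have "UNIV \<times> N \<in> null_sets (lborel \<Otimes>\<^sub>M lborel :: (real \<times> 'm) measure)"
    using N(1) by (intro lborel.times_in_null_sets2) auto
  then show ?thesis
    using N(2) by (intro AE_I'[where N="UNIV \<times> N"]) (auto simp: lborel_prod shiftT_def)
qed

lemma lebesgue_measurable_shiftT:
  fixes \<theta> :: "'m::euclidean_space \<Rightarrow> real" and \<zeta> :: "real \<Rightarrow> 'n::euclidean_space"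
  assumes "\<theta> \<in> borel_measurable lebesgue" and [measurable]: "\<zeta> \<in> borel_measurable borel"
  shows "shiftT \<theta> \<zeta> \<in> borel_measurable lebesgue"
proof -
  obtain \<theta>' where [measurable]: "\<theta>' \<in> borel_measurable lborel" and "AE y in lborel. \<theta> y = \<theta>' y"
    using completion_ex_borel_measurable_real[OF assms(1)] by blast
  then have "AE p in lebesgue. shiftT \<theta>' \<zeta> p = shiftT \<theta> \<zeta> p"
    by (intro AE_completion AE_lborel_shiftT_eq) (simp add: eq_commute)
  moreover have "shiftT \<theta>' \<zeta> \<in> borel_measurable lebesgue"
    by (intro measurable_completion) simp
  ultimately show ?thesis
    by (rule borel_measurable_AE[rotated])
qed

lemma nn_integral_shiftT_diff_sq_le:
  fixes \<theta>A \<theta>B :: "'m::euclidean_space \<Rightarrow> real" and \<zeta> g :: "real \<Rightarrow> 'n::euclidean_space"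
  assumes [measurable]: "\<theta>A \<in> borel_measurable borel" "\<theta>B \<in> borel_measurable borel"
    "\<zeta> \<in> borel_measurable borel" "g \<in> borel_measurable borel"
    and FTC: "\<And>u v. u \<le> v \<Longrightarrow> (g has_integral (\<zeta> v - \<zeta> u)) {u..v}"
  shows "(\<integral>\<^sup>+p. ennreal ((norm (shiftT \<theta>A \<zeta> p - shiftT \<theta>B \<zeta> p))\<^sup>2) \<partial>lborel)
    \<le> (\<integral>\<^sup>+y. ennreal ((\<theta>A y - \<theta>B y)\<^sup>2) \<partial>lborel) * (\<integral>\<^sup>+t. ennreal ((norm (g t))\<^sup>2) \<partial>lborel)"
proof -
  let ?F = "\<lambda>p. ennreal ((norm (shiftT \<theta>A \<zeta> p - shiftT \<theta>B \<zeta> p))\<^sup>2)"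
  have [measurable]: "?F \<in> borel_measurable (lborel \<Otimes>\<^sub>M lborel :: (real \<times> 'm) measure)"
    by (simp add: lborel_prod)
  have "(\<integral>\<^sup>+p. ?F p \<partial>lborel) = (\<integral>\<^sup>+y. (\<integral>\<^sup>+x. ?F (x, y) \<partial>lborel) \<partial>lborel)"
    by (subst lborel_prod[symmetric]) (rule lborel_pair.nn_integral_snd[symmetric], measurable)
  also have "\<dots> \<le> (\<integral>\<^sup>+y. ennreal ((\<theta>A y - \<theta>B y)\<^sup>2) * (\<integral>\<^sup>+t. ennreal ((norm (g t))\<^sup>2) \<partial>lborel) \<partial>lborel)"
    using nn_integral_translate_diff_sq_le[OF _ FTC]
    by (intro nn_integral_mono) (simp add: shiftT_def)
  also have "\<dots> = (\<integral>\<^sup>+y. ennreal ((\<theta>A y - \<theta>B y)\<^sup>2) \<partial>lborel) * (\<integral>\<^sup>+t. ennreal ((norm (g t))\<^sup>2) \<partial>lborel)"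
    by (rule nn_integral_multc) measurable
  finally show ?thesis .
qed

lemma nn_integral_shiftT_diff_sq_le_lebesgue:
  fixes \<theta>A \<theta>B :: "'m::euclidean_space \<Rightarrow> real" and \<zeta> g :: "real \<Rightarrow> 'n::euclidean_space"
  assumes "\<theta>A \<in> borel_measurable lebesgue" "\<theta>B \<in> borel_measurable lebesgue"
    and "\<zeta> \<in> borel_measurable borel" "g \<in> borel_measurable lebesgue"
    and FTC: "\<And>u v. u \<le> v \<Longrightarrow> (g has_integral (\<zeta> v - \<zeta> u)) {u..v}"
  shows "(\<integral>\<^sup>+p. ennreal ((norm (shiftT \<theta>A \<zeta> p - shiftT \<theta>B \<zeta> p))\<^sup>2) \<partial>lebesgue)
    \<le> (\<integral>\<^sup>+y. ennreal ((\<theta>A y - \<theta>B y)\<^sup>2) \<partial>lebesgue) * (\<integral>\<^sup>+t. ennreal ((norm (g t))\<^sup>2) \<partial>lebesgue)"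
proof -
  obtain A where A: "A \<in> borel_measurable lborel" "AE y in lborel. \<theta>A y = A y"
    using completion_ex_borel_measurable_real[OF assms(1)] by blast
  obtain B where B: "B \<in> borel_measurable lborel" "AE y in lborel. \<theta>B y = B y"
    using completion_ex_borel_measurable_real[OF assms(2)] by blast
  obtain g' where g': "g' \<in> borel_measurable lborel" "AE t in lborel. g t = g' t"
    using completion_ex_borel_measurable_euclidean[OF assms(4)] by blast
  have FTC': "(g' has_integral (\<zeta> v - \<zeta> u)) {u..v}" if "u \<le> v" for u v
    using FTC[OF that] g'(2) by (subst has_integral_AE[symmetric]) auto
  have "AE p in lborel. shiftT \<theta>A \<zeta> p = shiftT A \<zeta> p"
    using A(2) by (rule AE_lborel_shiftT_eq)
  moreover have "AE p in lborel. shiftT \<theta>B \<zeta> p = shiftT B \<zeta> p"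
    using B(2) by (rule AE_lborel_shiftT_eq)
  ultimately have "(\<integral>\<^sup>+p. ennreal ((norm (shiftT \<theta>A \<zeta> p - shiftT \<theta>B \<zeta> p))\<^sup>2) \<partial>lebesgue)
      = (\<integral>\<^sup>+p. ennreal ((norm (shiftT A \<zeta> p - shiftT B \<zeta> p))\<^sup>2) \<partial>lborel)"
    unfolding nn_integral_completion by (intro nn_integral_cong_AE) auto
  also have "\<dots> \<le> (\<integral>\<^sup>+y. ennreal ((A y - B y)\<^sup>2) \<partial>lborel) * (\<integral>\<^sup>+t. ennreal ((norm (g' t))\<^sup>2) \<partial>lborel)"
    using A(1) B(1) g'(1) assms(3) FTC' by (intro nn_integral_shiftT_diff_sq_le) auto
  also have "(\<integral>\<^sup>+y. ennreal ((A y - B y)\<^sup>2) \<partial>lborel) = (\<integral>\<^sup>+y. ennreal ((\<theta>A y - \<theta>B y)\<^sup>2) \<partial>lebesgue)"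
    using A(2) B(2) unfolding nn_integral_completion by (intro nn_integral_cong_AE) auto
  also have "(\<integral>\<^sup>+t. ennreal ((norm (g' t))\<^sup>2) \<partial>lborel) = (\<integral>\<^sup>+t. ennreal ((norm (g t))\<^sup>2) \<partial>lebesgue)"
    using g'(2) unfolding nn_integral_completion by (intro nn_integral_cong_AE) auto
  finally show ?thesis .
qed

theorem corollary3p5:
  fixes \<theta>A \<theta>B :: "'m::euclidean_space \<Rightarrow> real"
    and \<zeta> g :: "real \<Rightarrow> 'n::euclidean_space"
  assumes "\<theta>A \<in> borel_measurable lebesgue" "integrable lebesgue (\<lambda>y. (\<theta>A y)\<^sup>2)"
    and "\<theta>B \<in> borel_measurable lebesgue" "integrable lebesgue (\<lambda>y. (\<theta>B y)\<^sup>2)"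
    and "continuous_on UNIV \<zeta>"
    and "\<And>a b. a \<le> b \<Longrightarrow> (g has_integral (\<zeta> b - \<zeta> a)) {a..b}"
    and "g \<in> borel_measurable lebesgue" "integrable lebesgue (\<lambda>x. (norm (g x))\<^sup>2)"
  shows "(\<lambda>p. shiftT \<theta>A \<zeta> p - shiftT \<theta>B \<zeta> p) \<in> borel_measurable lebesgue
    \<and> integrable lebesgue (\<lambda>p. (norm (shiftT \<theta>A \<zeta> p - shiftT \<theta>B \<zeta> p))\<^sup>2)
    \<and> sqrt (LINT p|lebesgue. (norm (shiftT \<theta>A \<zeta> p - shiftT \<theta>B \<zeta> p))\<^sup>2)
      \<le> sqrt (LINT y|lebesgue. (\<theta>A y - \<theta>B y)\<^sup>2) * sqrt (LINT x|lebesgue. (norm (g x))\<^sup>2)"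
proof -
  have \<zeta>: "\<zeta> \<in> borel_measurable borel"
    using assms(5) by (rule borel_measurable_continuous_onI)
  define T where "T = (LINT y|lebesgue. (\<theta>A y - \<theta>B y)\<^sup>2)"
  define G where "G = (LINT x|lebesgue. (norm (g x))\<^sup>2)"
  have "integrable lebesgue (\<lambda>y. (\<theta>A y - \<theta>B y)\<^sup>2)"
    using assms(1-4) by (rule integrable_power2_diff)
  then have T: "(\<integral>\<^sup>+y. ennreal ((\<theta>A y - \<theta>B y)\<^sup>2) \<partial>lebesgue) = ennreal T"
    unfolding T_def by (rule nn_integral_eq_integral) simp
  have G: "(\<integral>\<^sup>+x. ennreal ((norm (g x))\<^sup>2) \<partial>lebesgue) = ennreal G"
    unfolding G_def using assms(8) by (rule nn_integral_eq_integral) simp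
  have D: "(\<lambda>p. shiftT \<theta>A \<zeta> p - shiftT \<theta>B \<zeta> p) \<in> borel_measurable lebesgue"
    using lebesgue_measurable_shiftT[OF assms(1) \<zeta>] lebesgue_measurable_shiftT[OF assms(3) \<zeta>]
    by (rule borel_measurable_diff)
  have "(\<integral>\<^sup>+p. ennreal ((norm (shiftT \<theta>A \<zeta> p - shiftT \<theta>B \<zeta> p))\<^sup>2) \<partial>lebesgue) \<le> ennreal (T * G)"
    using nn_integral_shiftT_diff_sq_le_lebesgue[OF assms(1,3) \<zeta> assms(7,6)]
    by (simp add: T G T_def G_def ennreal_mult)
  then have "integrable lebesgue (\<lambda>p. (norm (shiftT \<theta>A \<zeta> p - shiftT \<theta>B \<zeta> p))\<^sup>2)
      \<and> (LINT p|lebesgue. (norm (shiftT \<theta>A \<zeta> p - shiftT \<theta>B \<zeta> p))\<^sup>2) \<le> T * G"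
    using D by (intro nn_integral_le_imp_integrable_integral_le) (auto simp: T_def G_def)
  with D show ?thesis
    by (simp add: T_def G_def real_sqrt_mult[symmetric])
qed

end
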